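(* Let $0<x<\pi$. (a) For every $\mu>-1/2$, $|L(x,\mu)|<M\left((2\mu+1)\sin\frac{x}{2}\right)$; equivalently, for every $\lambda>0$, $|\mathrm{L}(x,\lambda)|<M(\lambda\sin x)$. (b) If $\lambda>0$ and $\lambda\sin x>t_0$, then $|\mathrm{L}(x,\lambda)|<\operatorname{arccot}(\lambda\sin x)$. (c) If $\mu>-1/2$ and $(2\mu+1)\sin\frac{x}{2}<1$, then \[ |L(x,\mu)|<\ln\frac{1}{(2\mu+1)\sin\frac{x}{2}}+C_2,\qquad C_2=\ln(1+\sqrt2). \]
   Context: For real $x$ and $\mu>-1$, $L(x,\mu)=\sum_{k=1}^\infty \frac{e^{ikx}}{k+\mu}$ (convergent for $x\notin 2\pi\mathbb{Z}$), and for $\lambda>-1$, $\mathrm{L}(x,\lambda)=e^{-ix}L\left(2x,\frac{\lambda-1}{2}\right)=2\sum_{k=1}^\infty\frac{e^{(2k-1)ix}}{2k+\lambda-1}$. For $t>0$, $M(t)=\int_0^\infty \frac{e^{-tu}}{\sqrt{u^2+1}}\,du$. The constant $t_0$ is defined as $t_0=\inf\{s>0:\ M(t)<\operatorname{arccot} t \text{ for all } t>s\}$ (numerically $t_0\approx 0.7096$, the positive root of $M(t)=\operatorname{arccot}t$). *)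

theory Defs
  imports "HOL-Analysis.Analysis"
begin

definition Lser :: "real \<Rightarrow> real \<Rightarrow> complex" where
  "Lser x \<mu> = (\<Sum>n. cis (real (Suc n) * x) / complex_of_real (real (Suc n) + \<mu>))"

definition Lbig :: "real \<Rightarrow> real \<Rightarrow> complex" where
  "Lbig x lam = cis (- x) * Lser (2 * x) ((lam - 1) / 2)"

definition Mfun :: "real \<Rightarrow> real" where
  "Mfun t = integral {0..} (\<lambda>u. exp (- t * u) / sqrt (u\<^sup>2 + 1))"

definition arccot :: "real \<Rightarrow> real" where
  "arccot t = pi / 2 - arctan t"

definition t0 :: real where
  "t0 = Inf {s. s > 0 \<and> (\<forall>t>s. Mfun t < arccot t)}"

end

theory Submission
  imports Defs "HOL-Real_Asymp.Real_Asymp"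
begin

(* Writing 1/(k+mu) as the integral of exp(-(k+mu) s) over s > 0 and summing the geometric
   series gives L(x,mu) as the integral of exp(-mu s) z/(1-z) with z = exp(-s) e^(ix).
   Since |1-z|^2 = (1-e^(-s))^2 + 4 e^(-s) sin^2(x/2) and 2 sinh(s/2) > s, we get
   |1-z|^2 > e^(-s) (s^2 + 4 sin^2(x/2)), so the integrand is strictly dominated by
   exp(-(mu+1/2) s) / sqrt(s^2 + 4 sin^2(x/2)); the substitution s = 2 sin(x/2) u turns the
   integral of the latter into M((2mu+1) sin(x/2)).  The second form of (a) is the first one at 2x.
   For (b), M(t) < arccot t holds beyond t0 (and t0 is finite because M(t) <= 1/t - 1/t^3 + 9/t^5
   < arctan(1/t) for t > 4); for (c), M(t) <= arsinh(1/t) by Jensen's inequality for the concave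
   function arsinh, and arsinh(1/t) <= ln(1/t) + ln(1 + sqrt 2) for t <= 1. *)

lemma sinh_real_gt_self:
  fixes x :: real
  assumes "0 < x"
  shows "x < sinh x"
proof -
  have "\<exists>d. DERIV (\<lambda>y. sinh y - y) y :> d \<and> 0 < d" if "0 < y" for y :: real
  proof (intro exI conjI)
    show "DERIV (\<lambda>y. sinh y - y) y :> cosh y - 1" by (auto intro!: derivative_eq_intros)
    have "1 < cosh y ^ 2" using that by (simp add: cosh_square_eq)
    then show "0 < cosh y - 1" using power_less_imp_less_base[of 1 2 "cosh y"] by simp
  qed
  then have "(\<lambda>y. sinh y - y) 0 < (\<lambda>y. sinh y - y) x"
    by (intro DERIV_pos_imp_increasing_open[OF assms] continuous_intros) simp_all
  then show ?thesis by simp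
qed

lemma norm_one_minus_scaled_cis_sq:
  fixes r x :: real
  shows "(cmod (1 - of_real r * cis x))^2 = (1 - r)^2 + 4 * r * sin (x/2)^2"
proof -
  have cos_x: "cos x = 1 - 2 * sin (x/2)^2" using cos_double_sin[of "x/2"] by simp
  have "(cmod (1 - of_real r * cis x))^2 = (1 - r * cos x)^2 + (r * sin x)^2"
    by (simp add: cmod_power2)
  also have "\<dots> = 1 - 2 * r * cos x + r^2 * ((sin x)^2 + (cos x)^2)" by algebra
  also have "\<dots> = 1 - 2 * r * cos x + r^2" by simp
  also have "\<dots> = (1 - r)^2 + 4 * r * sin (x/2)^2"
    unfolding cos_x by (simp add: power2_eq_square algebra_simps)
  finally show ?thesis .
qed

lemma abs_sin_half_le_norm_one_minus_scaled_cis: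
  fixes r x :: real
  assumes "0 \<le> r"
  shows "\<bar>sin (x/2)\<bar> \<le> cmod (1 - of_real r * cis x)"
proof -
  have "(cmod (1 - of_real r * cis x))^2 - (sin (x/2))^2
      = (1 - r)^2 * (cos (x/2))^2 + r * (r + 2) * (sin (x/2))^2"
    unfolding norm_one_minus_scaled_cis_sq sin_squared_eq by (simp add: power2_eq_square algebra_simps)
  also have "\<dots> \<ge> 0" using assms by simp
  finally show ?thesis using abs_le_square_iff[of "sin (x/2)" "cmod (1 - of_real r * cis x)"] by simp
qed

lemma exp_mult_less_norm_one_minus_exp_cis_sq:
  fixes s x :: real
  assumes "0 < s"
  shows "exp (-s) * (s^2 + 4 * sin (x/2)^2) < (cmod (1 - of_real (exp (-s)) * cis x))^2"
proof -
  have "s < 2 * sinh (s/2)" using sinh_real_gt_self[of "s/2"] assms by simp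
  then have "s^2 < (2 * sinh (s/2))^2" using assms by (intro power_strict_mono) auto
  moreover have "exp (-s) * (2 * sinh (s/2))^2 = (1 - exp (-s))^2"
  proof -
    have exp_s: "exp (-s) = exp (-(s/2))^2" by (simp add: power2_eq_square flip: exp_add)
    have "exp (s/2) * exp (-(s/2)) = 1" by (simp flip: exp_add)
    then have exp_half: "exp (s/2) = 1 / exp (-(s/2))" by (simp add: eq_divide_eq)
    show ?thesis unfolding sinh_field_def exp_s exp_half by (simp add: field_simps power2_eq_square)
  qed
  ultimately have "exp (-s) * s^2 < (1 - exp (-s))^2" by (metis exp_gt_zero mult_strict_left_mono)
  then show ?thesis unfolding norm_one_minus_scaled_cis_sq by (simp add: algebra_simps)
qed

lemma norm_sum_power_Suc_le:
  fixes z :: "'a::real_normed_field"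
  assumes "norm z \<le> 1" "z \<noteq> 1"
  shows "norm (\<Sum>k<n. z ^ Suc k) \<le> 2 * norm z / norm (1 - z)"
proof -
  have "(\<Sum>k<n. z ^ Suc k) = z * (\<Sum>k<n. z ^ k)" by (simp add: sum_distrib_left)
  also have "\<dots> = z * ((z ^ n - 1) / (z - 1))" using geometric_sum[OF assms(2), of n] by simp
  finally have "norm (\<Sum>k<n. z ^ Suc k) = norm z * norm (z ^ n - 1) / norm (1 - z)"
    by (simp add: norm_mult norm_divide norm_minus_commute[of z])
  also have "\<dots> \<le> norm z * 2 / norm (1 - z)"
    using norm_triangle_ineq4[of "z ^ n" 1] power_le_one[OF norm_ge_zero assms(1), of n]
    by (intro divide_right_mono mult_left_mono) (simp_all add: norm_power)
  finally show ?thesis by (simp add: mult.commute)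
qed

lemma has_integral_Ioi_iff_Ici:
  fixes f :: "real \<Rightarrow> 'a::banach"
  shows "(f has_integral I) {a<..} \<longleftrightarrow> (f has_integral I) {a..}"
  by (rule has_integral_spike_set_eq) (auto intro: negligible_subset[of "{a}"])

lemma has_integral_exp_neg_Ioi:
  fixes b :: real
  assumes "0 < b"
  shows "((\<lambda>u. exp (-(b * u))) has_integral 1 / b) {0<..}"
  using has_integral_exp_minus_to_infinity[OF assms, of 0] by (simp add: has_integral_Ioi_iff_Ici)

lemma norm_sum_scaled_cis_power_le:
  fixes r x :: real
  assumes r: "0 \<le> r" "r \<le> 1" and sin: "sin (x/2) \<noteq> 0"
  shows "norm (\<Sum>k<n. (of_real r * cis x) ^ Suc k) \<le> 2 * r / \<bar>sin (x/2)\<bar>"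
proof -
  have "\<bar>sin (x/2)\<bar> \<le> cmod (1 - of_real r * cis x)"
    using abs_sin_half_le_norm_one_minus_scaled_cis[OF r(1)] .
  then have "0 < cmod (1 - of_real r * cis x)"
    and "2 * r / cmod (1 - of_real r * cis x) \<le> 2 * r / \<bar>sin (x/2)\<bar>"
    using r sin by (auto intro!: divide_left_mono mult_pos_pos)
  then show ?thesis
    using norm_sum_power_Suc_le[of "of_real r * cis x" n] r by (simp add: norm_mult)
qed

lemma has_integral_scaled_exp_cmult:
  fixes a b :: real and w :: complex
  assumes "0 < a" "0 < b"
  shows "((\<lambda>u. of_real (a * exp (-(b * a * u))) * w) has_integral w / of_real b) {0<..}"
proof -
  have "((\<lambda>u. of_real (a * exp (-((b * a) * u))) * w) has_integral of_real (a * (1 / (b * a))) * w) {0<..}"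
    using has_integral_exp_neg_Ioi[of "b * a"] assms
    by (intro has_integral_mult_left has_integral_of_real has_integral_mult_right) simp
  moreover have "of_real (a * (1 / (b * a))) * w = w / of_real b" using assms by (simp add: of_real_divide)
  ultimately show ?thesis by simp
qed

lemma Lser_has_integral:
  fixes x \<mu> a :: real
  assumes x: "0 < x" "x < 2 * pi" and \<mu>: "-1 < \<mu>" and a: "0 < a"
  shows "((\<lambda>u. of_real (a * exp (-((\<mu> + 1) * a * u))) * cis x / (1 - of_real (exp (-(a * u))) * cis x))
          has_integral Lser x \<mu>) {0<..}"
    (is "(?G has_integral _) _")
proof -
  define z where "z u = of_real (exp (-(a * u))) * cis x" for u
  define c where "c = sin (x/2)"
  have c: "0 < c" unfolding c_def using x by (intro sin_gt_zero) auto
  define f where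
    "f n u = (\<Sum>k<n. of_real (a * exp (-((Suc k + \<mu>) * a * u))) * cis (Suc k * x))" for n u
  have f_integral: "(f n has_integral (\<Sum>k<n. cis (Suc k * x) / of_real (Suc k + \<mu>))) {0<..}" for n
    unfolding f_def using \<mu> a by (intro has_integral_sum has_integral_scaled_exp_cmult) auto
  have f_eq: "f n u = of_real (a * exp (-(\<mu> * a * u))) * (\<Sum>k<n. z u ^ Suc k)" for n u
  proof -
    have exp_eq: "exp (-((Suc k + \<mu>) * a * u)) = exp (-(\<mu> * a * u)) * exp (-(a * u)) ^ Suc k" for k
      by (simp add: algebra_simps flip: exp_of_nat_mult exp_add)
    show ?thesis
      unfolding f_def z_def exp_eq sum_distrib_left power_mult_distrib Complex.DeMoivre of_real_mult
        of_real_power by (simp only: mult_ac)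
  qed
  have f_bound: "norm (f n u) \<le> 2 * a / c * exp (-((\<mu> + 1) * a * u))" if "0 < u" for n u
  proof -
    have "norm (f n u) = a * exp (-(\<mu> * a * u)) * norm (\<Sum>k<n. z u ^ Suc k)"
      unfolding f_eq norm_mult norm_of_real using a by simp
    also have "\<dots> \<le> a * exp (-(\<mu> * a * u)) * (2 * exp (-(a * u)) / c)"
      using norm_sum_scaled_cis_power_le[of "exp (-(a * u))" x n] a c that
      unfolding z_def c_def by (intro mult_left_mono) auto
    also have "\<dots> = 2 * a / c * exp (-((\<mu> + 1) * a * u))"
      by (simp add: algebra_simps flip: exp_add)
    finally show ?thesis .
  qed
  have f_tendsto: "(\<lambda>n. f n u) \<longlonglongrightarrow> ?G u" if "0 < u" for u
  proof -
    have "norm (z u) < 1" using a that by (simp add: z_def norm_mult)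
    from sums_mult[OF geometric_sums[OF this], of "z u"]
    have "(\<lambda>n. \<Sum>k<n. z u ^ Suc k) \<longlonglongrightarrow> z u / (1 - z u)" by (simp add: sums_def)
    then have "(\<lambda>n. f n u) \<longlonglongrightarrow> of_real (a * exp (-(\<mu> * a * u))) * (z u / (1 - z u))"
      unfolding f_eq by (rule tendsto_mult_left)
    also have "exp (-((\<mu> + 1) * a * u)) = exp (-(\<mu> * a * u)) * exp (-(a * u))"
      by (simp add: algebra_simps flip: exp_add)
    then have "of_real (a * exp (-(\<mu> * a * u))) * (z u / (1 - z u)) = ?G u"
      unfolding z_def by (simp add: mult_ac)
    finally show ?thesis .
  qed
  have bound_integrable: "(\<lambda>u. 2 * a / c * exp (-((\<mu> + 1) * a * u))) integrable_on {0<..}"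
    using has_integral_mult_right[OF has_integral_exp_neg_Ioi, of "(\<mu> + 1) * a" "2 * a / c"] \<mu> a
    unfolding integrable_on_def by auto
  have f_integrable: "f n integrable_on {0<..}" for n using f_integral by blast
  have G_integrable: "?G integrable_on {0<..}"
    by (rule dominated_convergence(1)[where f = f, OF f_integrable bound_integrable])
       (rule f_bound f_tendsto, simp)+
  have "(\<lambda>n. integral {0<..} (f n)) \<longlonglongrightarrow> integral {0<..} ?G"
    by (rule dominated_convergence(2)[where f = f, OF f_integrable bound_integrable])
       (rule f_bound f_tendsto, simp)+
  then have "(\<lambda>k. cis (Suc k * x) / of_real (Suc k + \<mu>)) sums integral {0<..} ?G"
    unfolding sums_def by (simp add: integral_unique[OF f_integral])
  then have "Lser x \<mu> = integral {0<..} ?G" unfolding Lser_def by (simp add: sums_iff)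
  with G_integrable show ?thesis by (simp add: has_integral_integral)
qed

lemma integral_less_on_subinterval:
  fixes f g :: "real \<Rightarrow> real"
  assumes int: "f integrable_on S" "g integrable_on S" and le: "\<And>x. x \<in> S \<Longrightarrow> f x \<le> g x"
    and ab: "{a..b} \<subseteq> S" "a < b" and cont: "continuous_on {a..b} f" "continuous_on {a..b} g"
    and less: "\<And>x. x \<in> {a<..<b} \<Longrightarrow> f x < g x"
  shows "integral S f < integral S g"
proof -
  have int_ab: "f integrable_on {a..b}" "g integrable_on {a..b}"
    using cont by (simp_all add: integrable_continuous_interval)
  have "0 < integral {a..b} g - integral {a..b} f"
    using integral_less_real[OF cont] ab less by simp
  also have "\<dots> = integral {a..b} (\<lambda>x. g x - f x)" by (rule integral_diff[OF int_ab(2,1), symmetric])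
  also have "\<dots> \<le> integral S (\<lambda>x. g x - f x)"
    using int int_ab ab le by (intro integral_subset_le integrable_diff) auto
  also have "\<dots> = integral S g - integral S f" by (rule integral_diff[OF int(2,1)])
  finally show ?thesis by simp
qed

lemma norm_Lser_integrand_less:
  fixes x \<mu> u :: real
  defines "c \<equiv> sin (x/2)"
  assumes c: "0 < c" and u: "0 < u"
  shows "cmod (of_real (2 * c * exp (-((\<mu> + 1) * (2 * c) * u))) * cis x
                / (1 - of_real (exp (-(2 * c * u))) * cis x))
         < exp (- ((2 * \<mu> + 1) * c) * u) / sqrt (u^2 + 1)"
proof -
  define s where "s = 2 * c * u"
  have s: "0 < s" unfolding s_def using c u by simp
  have "exp (-s) * (s^2 + 4 * c^2) = (2 * c * exp (-(s/2)) * sqrt (u^2 + 1))^2"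
    unfolding s_def power_mult_distrib
    by (simp add: power2_eq_square algebra_simps flip: exp_add)
  then have "(2 * c * exp (-(s/2)) * sqrt (u^2 + 1))^2 < (cmod (1 - of_real (exp (-s)) * cis x))^2"
    using exp_mult_less_norm_one_minus_exp_cis_sq[OF s, of x] unfolding c_def by simp
  then have den: "2 * c * exp (-(s/2)) * sqrt (u^2 + 1) < cmod (1 - of_real (exp (-s)) * cis x)"
    by (rule power2_less_imp_less) simp
  have den_pos: "0 < 2 * c * exp (-(s/2)) * sqrt (u^2 + 1)" using c by (simp add: add_nonneg_pos)
  have "cmod (of_real (2 * c * exp (-((\<mu> + 1) * s))) * cis x / (1 - of_real (exp (-s)) * cis x))
      = 2 * c * exp (-((\<mu> + 1) * s)) / cmod (1 - of_real (exp (-s)) * cis x)"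
    using c by (simp add: norm_divide norm_mult)
  also have "\<dots> < 2 * c * exp (-((\<mu> + 1) * s)) / (2 * c * exp (-(s/2)) * sqrt (u^2 + 1))"
    by (rule divide_strict_left_mono[OF den])
       (use c in simp, rule mult_pos_pos[OF less_trans[OF den_pos den] den_pos])
  also have "\<dots> = exp (- ((2 * \<mu> + 1) * c) * u) / sqrt (u^2 + 1)"
  proof -
    have "exp (-((\<mu> + 1) * s)) = exp (-(s/2)) * exp (- ((2 * \<mu> + 1) * c) * u)"
      unfolding s_def by (simp add: algebra_simps flip: exp_add)
    then show ?thesis using c by (simp add: field_simps)
  qed
  finally show ?thesis unfolding s_def by (simp add: mult_ac)
qed

lemma Mfun_has_integral:
  fixes t :: real
  assumes "0 < t"
  shows "((\<lambda>u. exp (- t * u) / sqrt (u^2 + 1)) has_integral Mfun t) {0..}"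
proof -
  have pos: "0 < u^2 + 1" for u :: real using zero_le_power2[of u] by linarith
  then have nonzero: "u^2 + 1 \<noteq> 0" for u :: real by (metis less_irrefl)
  have "(\<lambda>u. exp (- t * u) / sqrt (u^2 + 1)) integrable_on {0..}"
  proof (rule measurable_bounded_by_integrable_imp_integrable)
    show "(\<lambda>u. exp (- t * u) / sqrt (u^2 + 1)) \<in> borel_measurable (lebesgue_on {0..})"
      by (intro continuous_imp_measurable_on_sets_lebesgue continuous_intros) (auto simp: nonzero)
    show "(\<lambda>u. exp (- t * u)) integrable_on {0..}"
      using has_integral_exp_minus_to_infinity[OF assms, of 0] by blast
    show "norm (exp (- t * u) / sqrt (u^2 + 1)) \<le> exp (- t * u)" for u
      using pos[of u] by (simp add: divide_le_eq)
  qed simp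
  then show ?thesis unfolding Mfun_def by (rule integrable_integral)
qed

lemma norm_Lser_less_Mfun:
  fixes x \<mu> :: real
  assumes x: "0 < x" "x < 2 * pi" and \<mu>: "-1/2 < \<mu>"
  shows "cmod (Lser x \<mu>) < Mfun ((2 * \<mu> + 1) * sin (x/2))"
proof -
  define c where "c = sin (x/2)"
  define G where "G u = of_real (2 * c * exp (-((\<mu> + 1) * (2 * c) * u))) * cis x
                        / (1 - of_real (exp (-(2 * c * u))) * cis x)" for u
  define P where "P u = exp (- ((2 * \<mu> + 1) * c) * u) / sqrt (u^2 + 1)" for u
  have c: "0 < c" unfolding c_def using x by (intro sin_gt_zero) auto
  have G: "(G has_integral Lser x \<mu>) {0<..}"
    unfolding G_def using x \<mu> c by (intro Lser_has_integral) auto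
  have P: "(P has_integral Mfun ((2 * \<mu> + 1) * c)) {0<..}"
    unfolding P_def has_integral_Ioi_iff_Ici using c \<mu> by (intro Mfun_has_integral) simp
  have G_less_P: "norm (G u) < P u" if "0 < u" for u
    unfolding G_def P_def c_def using c that by (intro norm_Lser_integrand_less) (simp_all add: c_def)
  have "G absolutely_integrable_on {0<..}"
    using G P G_less_P by (intro absolutely_integrable_integrable_bound[where g = P])
      (auto intro: less_imp_le)
  then have norm_G: "(\<lambda>u. norm (G u)) integrable_on {0<..}"
    by (simp add: absolutely_integrable_on_def)
  have "cmod (Lser x \<mu>) \<le> integral {0<..} (\<lambda>u. norm (G u))"
    using integral_norm_bound_integral[OF has_integral_integrable[OF G] norm_G] integral_unique[OF G]
    by simp
  also have "\<dots> < integral {0<..} P"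
  proof (rule integral_less_on_subinterval[of _ _ _ 1 2])
    have "1 - of_real (exp (-(2 * c * u))) * cis x \<noteq> 0" if "1 \<le> u" for u
    proof -
      have "norm (of_real (exp (-(2 * c * u))) * cis x) < 1" using c that by (simp add: norm_mult)
      then show ?thesis by (metis norm_one right_minus_eq less_irrefl)
    qed
    moreover have "u^2 + 1 \<noteq> 0" for u :: real using zero_le_power2[of u] by linarith
    ultimately show "continuous_on {1..2} (\<lambda>u. norm (G u))" "continuous_on {1..2} P"
      unfolding G_def P_def by (auto intro!: continuous_intros)
  qed (use norm_G P G_less_P in \<open>auto intro: less_imp_le\<close>)
  also have "\<dots> = Mfun ((2 * \<mu> + 1) * sin (x/2))" using P unfolding c_def by (rule integral_unique)
  finally show ?thesis .
qed

lemma fundamental_theorem_of_calculus_Ici: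
  fixes F f :: "real \<Rightarrow> real"
  assumes deriv: "\<And>u. a \<le> u \<Longrightarrow> (F has_real_derivative f u) (at u)"
    and nonneg: "\<And>u. a \<le> u \<Longrightarrow> 0 \<le> f u"
    and lim: "(F \<longlongrightarrow> L) at_top"
  shows "(f has_integral (L - F a)) {a..}"
proof -
  have ftc: "(f has_integral (F y - F a)) {a..y}" if "a \<le> y" for y
  proof (rule fundamental_theorem_of_calculus[OF that])
    fix u assume "u \<in> {a..y}"
    then show "(F has_vector_derivative f u) (at u within {a..y})"
      using deriv by (auto simp: has_real_derivative_iff_has_vector_derivative[symmetric]
                           intro: has_field_derivative_at_within)
  qed
  show ?thesis
  proof (rule has_integral_to_inf[OF _ _ nonneg])
    show "f integrable_on {a..y}" for y
      using ftc[of y] by (cases "a \<le> y") auto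
    have "((\<lambda>y. F y - F a) \<longlongrightarrow> L - F a) at_top" by (intro tendsto_intros lim)
    moreover have "\<forall>\<^sub>F y in at_top. F y - F a = integral {a..y} f"
      using eventually_ge_at_top[of a] by eventually_elim (use ftc integral_unique in metis)
    ultimately show "((\<lambda>y. integral {a..y} f) \<longlongrightarrow> L - F a) at_top"
      by (rule Lim_transform_eventually)
  qed
qed

lemma arsinh_le_tangent:
  fixes u v :: real
  assumes u: "0 \<le> u" and v: "0 \<le> v"
  shows "arsinh u \<le> arsinh v + (u - v) / sqrt (v^2 + 1)"
proof -
  have deriv: "DERIV arsinh z :> 1 / sqrt (z^2 + 1)" for z :: real
    by (rule arsinh_real_has_field_derivative)
  have antimono: "1 / sqrt (z^2 + 1) \<le> 1 / sqrt (w^2 + 1)" if "0 \<le> w" "w \<le> z" for w z :: real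
    using that by (intro divide_left_mono) (auto intro!: mult_pos_pos add_nonneg_pos power_mono)
  consider "u = v" | "v < u" | "u < v" by linarith
  then show ?thesis
  proof cases
    case 2
    then obtain z where z: "v < z" "arsinh u - arsinh v = (u - v) * (1 / sqrt (z^2 + 1))"
      using MVT2[OF 2 deriv] by blast
    have "(u - v) * (1 / sqrt (z^2 + 1)) \<le> (u - v) * (1 / sqrt (v^2 + 1))"
      using 2 v z(1) by (intro mult_left_mono antimono) auto
    then show ?thesis using z(2) by simp
  next
    case 3
    then obtain z where z: "u < z" "z < v" "arsinh v - arsinh u = (v - u) * (1 / sqrt (z^2 + 1))"
      using MVT2[OF 3 deriv] by blast
    have "(v - u) * (1 / sqrt (v^2 + 1)) \<le> (v - u) * (1 / sqrt (z^2 + 1))"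
      using 3 u z(1,2) by (intro mult_left_mono antimono) auto
    then show ?thesis using z(3) by (simp add: diff_divide_distrib)
  qed simp
qed

lemma Mfun_le_arsinh_inverse:
  fixes t :: real
  assumes t: "0 < t"
  shows "Mfun t \<le> arsinh (1/t)"
proof -
  (* Integration by parts makes M t the mean of arsinh for the density t exp(-t u), whose own
     mean is 1/t; bounding arsinh by its tangent at 1/t (Jensen) yields the majorant B, which
     has the antiderivative K. *)
  define v where "v = 1/t"
  define d where "d = 1 / sqrt (v^2 + 1)"
  define B where "B u = exp (- t * u) / sqrt (u^2 + 1)
                        + t * exp (-(t * u)) * (arsinh v + (u - v) * d - arsinh u)" for u
  define K where "K = (\<lambda>u. exp (-(t * u)) * (arsinh u - (arsinh v + (u - v) * d))
                            - d / t * exp (-(t * u)))"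
  have v: "0 < v" unfolding v_def using t by simp
  have deriv: "(K has_real_derivative B u) (at u)" for u
  proof -
    have "(K has_real_derivative (- t * exp (-(t * u))) * (arsinh u - (arsinh v + (u - v) * d))
            + exp (-(t * u)) * (1 / sqrt (u^2 + 1) - d) - d / t * (- t * exp (-(t * u)))) (at u)"
      unfolding K_def by (auto intro!: derivative_eq_intros)
    then show ?thesis unfolding B_def using t by (simp add: field_simps)
  qed
  have majorant: "exp (- t * u) / sqrt (u^2 + 1) \<le> B u" if "0 \<le> u" for u
    using arsinh_le_tangent[OF that less_imp_le[OF v]] t unfolding B_def d_def by simp
  have B_integral: "(B has_integral (0 - K 0)) {0..}"
  proof (rule fundamental_theorem_of_calculus_Ici[OF deriv])
    show "0 \<le> B u" if "0 \<le> u" for u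
      by (rule order.trans[OF _ majorant[OF that]]) simp
    show "(K \<longlongrightarrow> 0) at_top" unfolding K_def using t by real_asymp
  qed
  have "Mfun t \<le> 0 - K 0"
    by (rule has_integral_le[OF Mfun_has_integral[OF t] B_integral]) (rule majorant, simp)
  also have "0 - K 0 = arsinh (1/t)" unfolding K_def v_def by simp
  finally show ?thesis .
qed

lemma inverse_sqrt_le_quadratic:
  fixes w :: real
  assumes w: "0 \<le> w"
  shows "1 / sqrt (w + 1) \<le> 1 - w/2 + 3 * w^2 / 8"
proof -
  define q where "q = 1 - w/2 + 3 * w^2 / 8"
  have q: "0 \<le> q"
  proof -
    have "q = 3/8 * (w - 2/3)^2 + 5/6" unfolding q_def by (simp add: power2_eq_square field_simps)
    then show ?thesis by simp
  qed
  have "q^2 * (w + 1) - 1 = w^3 * (9 * (w - 5/6)^2 + 135/4) / 64"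
    unfolding q_def by (simp add: power2_eq_square power3_eq_cube field_simps)
  also have "\<dots> \<ge> 0" using w by simp
  finally have "sqrt 1 \<le> sqrt (q^2 * (w + 1))" by simp
  then have "1 \<le> q * sqrt (w + 1)" using q by (simp add: real_sqrt_mult)
  moreover have "0 < sqrt (w + 1)" using w by simp
  ultimately show ?thesis unfolding q_def by (simp add: divide_le_eq mult.commute)
qed

lemma Mfun_le_inverse_poly:
  fixes t :: real
  assumes t: "0 < t"
  shows "Mfun t \<le> 1/t - 1/t^3 + 9/t^5"
proof -
  define p where "p = (\<lambda>u::real. 1 - u^2/2 + 3 * (u^2)^2 / 8)"
  define F where "F = (\<lambda>u. - exp (-(t * u)) * (p u / t + (- u + 3 * u^3 / 2) / t^2
                              + (- 1 + 9 * u^2 / 2) / t^3 + 9 * u / t^4 + 9 / t^5))"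
  have majorant: "exp (- t * u) / sqrt (u^2 + 1) \<le> exp (-(t * u)) * p u" for u
  proof -
    have "exp (- t * u) / sqrt (u^2 + 1) = exp (-(t * u)) * (1 / sqrt (u^2 + 1))" by simp
    also have "\<dots> \<le> exp (-(t * u)) * p u"
      unfolding p_def using inverse_sqrt_le_quadratic[of "u^2"] by (intro mult_left_mono) simp_all
    finally show ?thesis .
  qed
  have majorant_integral: "((\<lambda>u. exp (-(t * u)) * p u) has_integral (0 - F 0)) {0..}"
  proof (rule fundamental_theorem_of_calculus_Ici)
    show "(F has_real_derivative exp (-(t * u)) * p u) (at u)" for u
      unfolding F_def p_def using t
      by (auto intro!: derivative_eq_intros simp: field_simps eval_nat_numeral)
    show "0 \<le> exp (-(t * u)) * p u" for u
      by (rule order.trans[OF _ majorant]) simp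
    show "(F \<longlongrightarrow> 0) at_top" unfolding F_def p_def using t by real_asymp
  qed
  have "Mfun t \<le> 0 - F 0"
    by (rule has_integral_le[OF Mfun_has_integral[OF t] majorant_integral]) (rule majorant)
  also have "0 - F 0 = 1/t - 1/t^3 + 9/t^5" unfolding F_def p_def by simp
  finally show ?thesis .
qed

lemma arctan_gt_cubic:
  fixes y :: real
  assumes "0 < y"
  shows "y - y^3/3 < arctan y"
proof -
  have "\<exists>d. DERIV (\<lambda>z. arctan z - z + z^3/3) z :> d \<and> 0 < d" if "0 < z" for z :: real
  proof (intro exI conjI)
    have pos: "0 < 1 + z^2" by (simp add: add_pos_nonneg)
    have "DERIV (\<lambda>z. arctan z - z + z^3/3) z :> inverse (1 + z^2) - 1 + real 3 * z^(3 - Suc 0) / 3"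
      by (intro DERIV_add DERIV_diff DERIV_arctan DERIV_ident DERIV_cdivide DERIV_pow)
    moreover have "inverse (1 + z^2) - 1 + real 3 * z^(3 - Suc 0) / 3 = z^4 / (1 + z^2)"
      using pos by (simp add: field_simps power2_eq_square power4_eq_xxxx)
    ultimately show "DERIV (\<lambda>z. arctan z - z + z^3/3) z :> z^4 / (1 + z^2)" by simp
    show "0 < z^4 / (1 + z^2)" using that pos by simp
  qed
  then have "(\<lambda>z. arctan z - z + z^3/3) 0 < (\<lambda>z. arctan z - z + z^3/3) y"
    by (intro DERIV_pos_imp_increasing_open[OF assms] continuous_intros) simp_all
  then show ?thesis by simp
qed

lemma arccot_eq_arctan_inverse:
  fixes t :: real
  assumes "0 < t"
  shows "arccot t = arctan (1/t)"
  using arctan_inverse[of t] assms unfolding arccot_def by (simp add: inverse_eq_divide)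

lemma Mfun_less_arccot:
  fixes t :: real
  assumes t: "4 < t"
  shows "Mfun t < arccot t"
proof -
  define y where "y = 1/t"
  have y: "0 < y" "y < 1/4" unfolding y_def using t by (auto simp: field_simps)
  have "Mfun t \<le> y - y^3 + 9 * y^5"
    using Mfun_le_inverse_poly[of t] t unfolding y_def by (simp add: power_one_over)
  also have "\<dots> < y - y^3/3"
  proof -
    have "y^2 < (1/4)^2" using y by (intro power_strict_mono) auto
    then have "9 * y^2 < 2/3" by (simp add: power_divide)
    then have "y^3 * (9 * y^2) < y^3 * (2/3)" using y by (intro mult_strict_left_mono) simp_all
    moreover have "y^3 * (9 * y^2) = 9 * y^5" by (simp add: power_add[symmetric])
    ultimately show ?thesis by simp
  qed
  also have "\<dots> < arctan y" by (rule arctan_gt_cubic[OF y(1)])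
  also have "\<dots> = arccot t" using arccot_eq_arctan_inverse t unfolding y_def by simp
  finally show ?thesis .
qed

lemma Mfun_less_arccot_beyond_t0:
  fixes t :: real
  assumes "t0 < t"
  shows "Mfun t < arccot t"
proof -
  define S where "S = {s::real. 0 < s \<and> (\<forall>t>s. Mfun t < arccot t)}"
  have "4 \<in> S" unfolding S_def using Mfun_less_arccot by auto
  moreover have "bdd_below S" unfolding S_def by (rule bdd_belowI[of _ 0]) auto
  ultimately have "\<exists>s\<in>S. s < t" using assms cInf_less_iff[of S t] unfolding t0_def S_def by blast
  then show ?thesis unfolding S_def by auto
qed

lemma arsinh_inverse_le_ln:
  fixes t :: real
  assumes t: "0 < t" "t \<le> 1"
  shows "arsinh (1/t) \<le> ln (1/t) + ln (1 + sqrt 2)"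
proof -
  define y where "y = 1/t"
  have y: "1 \<le> y" unfolding y_def using t by simp
  have "sqrt (y^2 + 1) \<le> sqrt (2 * y^2)" using y by (simp add: one_le_power)
  also have "\<dots> = sqrt 2 * y" using y by (simp add: real_sqrt_mult)
  finally have "y + sqrt (y^2 + 1) \<le> y * (1 + sqrt 2)" by (simp add: algebra_simps)
  then have "ln (y + sqrt (y^2 + 1)) \<le> ln (y * (1 + sqrt 2))"
    using y by (intro ln_mono) (auto simp: add_pos_nonneg)
  also have "\<dots> = ln y + ln (1 + sqrt 2)" using y by (intro ln_mult_pos) (auto simp: add_pos_nonneg)
  finally show ?thesis unfolding y_def arsinh_real_def .
qed

theorem theorem3:
  fixes x :: real
  assumes "0 < x" and "x < pi"
  shows "(\<forall>\<mu>::real. \<mu> > -1/2 \<longrightarrow>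
            cmod (Lser x \<mu>) < Mfun ((2*\<mu>+1) * sin (x/2)))
       \<and> (\<forall>lam::real. lam > 0 \<longrightarrow> cmod (Lbig x lam) < Mfun (lam * sin x))
       \<and> (\<forall>lam::real. lam > 0 \<and> lam * sin x > t0 \<longrightarrow>
            cmod (Lbig x lam) < arccot (lam * sin x))
       \<and> (\<forall>\<mu>::real. \<mu> > -1/2 \<and> (2*\<mu>+1) * sin (x/2) < 1 \<longrightarrow>
            cmod (Lser x \<mu>) < ln (1 / ((2*\<mu>+1) * sin (x/2))) + ln (1 + sqrt 2))"
proof -
  have part_a: "cmod (Lser x \<mu>) < Mfun ((2*\<mu>+1) * sin (x/2))" if "-1/2 < \<mu>" for \<mu>
    using assms that by (intro norm_Lser_less_Mfun) auto
  have part_b: "cmod (Lbig x lam) < Mfun (lam * sin x)" if "0 < lam" for lam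
  proof -
    have "cmod (Lbig x lam) = cmod (Lser (2 * x) ((lam - 1) / 2))"
      unfolding Lbig_def by (simp add: norm_mult)
    also have "\<dots> < Mfun ((2 * ((lam - 1) / 2) + 1) * sin (2 * x / 2))"
      using assms that by (intro norm_Lser_less_Mfun) auto
    also have "(2 * ((lam - 1) / 2) + 1) * sin (2 * x / 2) = lam * sin x" by (simp add: field_simps)
    finally show ?thesis .
  qed
  have part_c: "cmod (Lser x \<mu>) < ln (1 / ((2*\<mu>+1) * sin (x/2))) + ln (1 + sqrt 2)"
    if \<mu>: "-1/2 < \<mu>" and small: "(2*\<mu>+1) * sin (x/2) < 1" for \<mu>
  proof -
    have "0 < (2*\<mu>+1) * sin (x/2)" using assms \<mu> by (intro mult_pos_pos sin_gt_zero) auto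
    then have "Mfun ((2*\<mu>+1) * sin (x/2)) \<le> ln (1 / ((2*\<mu>+1) * sin (x/2))) + ln (1 + sqrt 2)"
      using small Mfun_le_arsinh_inverse arsinh_inverse_le_ln by (meson less_imp_le order_trans)
    then show ?thesis using part_a[OF \<mu>] by linarith
  qed
  show ?thesis
    using part_a part_b part_c Mfun_less_arccot_beyond_t0 by (blast intro: less_trans)
qed

end
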